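(* Fix a string $x\in\{0,1\}^*$. Then $\mu_x(\varepsilon)=\rho(x)$, where $\varepsilon$ is the empty string, and for all nonempty strings $w=xy\in\{0,1\}^*$, \[ \mu_x(y1)=\mu_x(y)+1,\qquad \mu_x(y0)=\begin{cases}0&\text{if }\rho(xy)>\mu_x(y)=0,\\ \mu_x(y)-1&\text{otherwise.}\end{cases} \] Additionally, there exists a closed fork $F\vdash xy$ such that $\rho(F)=\rho(xy)$ and $\mu_x(F)=\mu_x(y)$.
   Context: Characteristic strings and forks. A characteristic string is $w=w_1\dots w_n\in\{0,1\}^n$; index $i$ is honest if $w_i=0$ and adversarial if $w_i=1$. A fork for $w$ is a rooted tree with edges directed away from the root $r$ and labeling $\ell:V\to\{0,\dots,n\}$ with (F1) $\ell(r)=0$; (F2) labels strictly increasing along directed paths; (F3) each honest index labels exactly one vertex; (F4) for honest $i<j$ the vertex labeled $i$ has strictly smaller depth than the vertex labeled $j$. Write $F\vdash w$. A vertex is honest if it is the root or labeled by an honest index. A tine is a directed path from the root; its length is its number of edges, $\ell(t)$ the label of its last vertex. A fork is closed if every leaf is honest (the single-vertex fork is closed); a closed fork has a unique longest tine $\hat t$. For closed $F\vdash w$ and tine $t$: $\mathrm{gap}(t)=\mathrm{length}(\hat t)-\mathrm{length}(t)$, $\mathrm{reserve}(t)=|\{i:w_i=1,\ i>\ell(t)\}|$, $\mathrm{reach}(t)=\mathrm{reserve}(t)-\mathrm{gap}(t)$; $\rho(F)=\max_t\mathrm{reach}(t)$ and $\rho(w)=\max\{\rho(F):F\vdash w\text{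 closed}\}$. For $w=xy$, tines $t_1,t_2$ are disjoint over $y$ if they share no edge terminating at a vertex whose label is an index of $y$ (label $>|x|$); a tine may be paired with itself. $\mu_x(F)=\max\min\{\mathrm{reach}(t_1),\mathrm{reach}(t_2)\}$ over pairs disjoint over $y$, and $\mu_x(y)=\max\{\mu_x(F):F\vdash xy\text{ closed}\}$. *)

theory Defs
  imports Main "HOL-Library.Sublist"
begin

(* Characteristic strings: bool lists, True = adversarial (1), False = honest (0).
   Indices are 1-based: w_i = w ! (i - 1). *)

definition honest_idx :: "bool list \<Rightarrow> nat \<Rightarrow> bool" where
  "honest_idx w i \<longleftrightarrow> 1 \<le> i \<and> i \<le> length w \<and> \<not> w ! (i - 1)"

definition adv_idx :: "bool list \<Rightarrow> nat \<Rightarrow> bool" where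
  "adv_idx w i \<longleftrightarrow> 1 \<le> i \<and> i \<le> length w \<and> w ! (i - 1)"

(* A rooted tree is a finite prefix-closed set T of nat lists containing [] (the root);
   the edges are v \<rightarrow> v @ [k].  The depth of v is length v, and the unique directed path
   from the root to v (a tine) is identified with its end vertex v.
   lab is the labelling (only its values on T matter). *)

definition is_tree :: "nat list set \<Rightarrow> bool" where
  "is_tree T \<longleftrightarrow> finite T \<and> [] \<in> T \<and> (\<forall>v k. v @ [k] \<in> T \<longrightarrow> v \<in> T)"

definition is_fork :: "bool list \<Rightarrow> nat list set \<Rightarrow> (nat list \<Rightarrow> nat) \<Rightarrow> bool" where
  "is_fork w T lab \<longleftrightarrow> is_tree T
     \<and> (\<forall>v\<in>T. lab v \<le> length w)
     \<and> lab [] = 0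
     \<and> (\<forall>v k. v @ [k] \<in> T \<longrightarrow> lab v < lab (v @ [k]))
     \<and> (\<forall>i. honest_idx w i \<longrightarrow> card {v \<in> T. lab v = i} = 1)
     \<and> (\<forall>u\<in>T. \<forall>v\<in>T. honest_idx w (lab u) \<and> honest_idx w (lab v) \<and> lab u < lab v
           \<longrightarrow> length u < length v)"

definition honest_vertex :: "bool list \<Rightarrow> (nat list \<Rightarrow> nat) \<Rightarrow> nat list \<Rightarrow> bool" where
  "honest_vertex w lab v \<longleftrightarrow> v = [] \<or> honest_idx w (lab v)"

definition is_leaf :: "nat list set \<Rightarrow> nat list \<Rightarrow> bool" where
  "is_leaf T v \<longleftrightarrow> v \<in> T \<and> (\<forall>k. v @ [k] \<notin> T)"

definition closed_fork :: "bool list \<Rightarrow> nat list set \<Rightarrow> (nat list \<Rightarrow> nat) \<Rightarrow> bool" where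
  "closed_fork w T lab \<longleftrightarrow> is_fork w T lab \<and> (\<forall>v. is_leaf T v \<longrightarrow> honest_vertex w lab v)"

definition max_len :: "nat list set \<Rightarrow> nat" where
  "max_len T = Max (length ` T)"

definition gap :: "nat list set \<Rightarrow> nat list \<Rightarrow> int" where
  "gap T t = int (max_len T) - int (length t)"

definition reserve :: "bool list \<Rightarrow> (nat list \<Rightarrow> nat) \<Rightarrow> nat list \<Rightarrow> int" where
  "reserve w lab t = int (card {i. adv_idx w i \<and> i > lab t})"

definition reach :: "bool list \<Rightarrow> nat list set \<Rightarrow> (nat list \<Rightarrow> nat) \<Rightarrow> nat list \<Rightarrow> int" where
  "reach w T lab t = reserve w lab t - gap T t"

definition rho_fork :: "bool list \<Rightarrow> nat list set \<Rightarrow> (nat list \<Rightarrow> nat) \<Rightarrow> int" where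
  "rho_fork w T lab = Max (reach w T lab ` T)"

definition rho_str :: "bool list \<Rightarrow> int" where
  "rho_str w = Max {rho_fork w T lab | T lab. closed_fork w T lab}"

(* For w = x y: tines t1, t2 (given by their end vertices) are disjoint over y if they share
   no edge terminating at a vertex whose label exceeds |x|.  A shared edge terminating at u
   means u \<noteq> [] is on both paths, i.e. a common nonempty prefix. *)
definition disjoint_over :: "bool list \<Rightarrow> (nat list \<Rightarrow> nat) \<Rightarrow> nat list \<Rightarrow> nat list \<Rightarrow> bool" where
  "disjoint_over x lab t1 t2 \<longleftrightarrow>
     \<not> (\<exists>u. u \<noteq> [] \<and> prefix u t1 \<and> prefix u t2 \<and> lab u > length x)"

definition mu_fork :: "bool list \<Rightarrow> bool list \<Rightarrow> nat list set \<Rightarrow> (nat list \<Rightarrow> nat) \<Rightarrow> int" where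
  "mu_fork x y T lab = Max {min (reach (x @ y) T lab t1) (reach (x @ y) T lab t2) | t1 t2.
       t1 \<in> T \<and> t2 \<in> T \<and> disjoint_over x lab t1 t2}"

definition mu_str :: "bool list \<Rightarrow> bool list \<Rightarrow> int" where
  "mu_str x y = Max {mu_fork x y T lab | T lab. closed_fork (x @ y) T lab}"

end

theory Submission
  imports Defs
begin

text \<open>
An adversarial last slot changes neither the closed forks (a vertex carrying the last label
would be an adversarial leaf) nor the gaps, and it raises every reserve by one, so rho and mu
both grow by one.

For an honest last slot, a closed fork for w can be extended along any tine t of nonnegative
reach: the reserve of t pays for a chain of adversarial vertices down to the depth of the
longest tine, topped by the new honest vertex. That vertex becomes the unique longest tine,
with reach 0, while every old tine loses one unit of reach and disjointness over y is
unaffected. Extending the rho-maximal tine yields mu - 1; when rho > mu = 0, extending instead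
the member of a mu-optimal pair that is disjoint from the rho-maximal tine yields a pair with
reaches 0 and rho - 1.

Conversely, a closed fork for w0 restricts to the closed fork for w spanned by the honest
vertices of w. Every tine other than the new honest vertex v has an ancestor in the
restriction with reach larger by at least one, since each adversarial vertex in between
spends one unit of reserve for one unit of depth; v itself has reach at most 0 and an
ancestor of nonnegative reach. This gives the matching upper bounds. Carrying along, by
induction on y, a single fork that is optimal for rho and for mu at once proves the
recurrences, for every y.
\<close>

lemma honest_idx_snoc: "honest_idx (w @ [b]) i \<longleftrightarrow> honest_idx w i \<or> (i = Suc (length w) \<and> \<not> b)"
  unfolding honest_idx_def by (cases "i \<le> length w") (auto simp: nth_append)

lemma adv_idx_snoc: "adv_idx (w @ [b]) i \<longleftrightarrow> adv_idx w i \<or> (i = Suc (length w) \<and> b)"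
  unfolding adv_idx_def by (cases "i \<le> length w") (auto simp: nth_append)

lemma honest_idx_le_length: "honest_idx w i \<Longrightarrow> i \<le> length w"
  unfolding honest_idx_def by simp

lemma adv_idx_le_length: "adv_idx w i \<Longrightarrow> i \<le> length w"
  unfolding adv_idx_def by simp

lemma honest_idx_not_adv_idx: "honest_idx w i \<Longrightarrow> \<not> adv_idx w i"
  unfolding honest_idx_def adv_idx_def by simp

lemma finite_adv_idx: "finite {i. adv_idx w i \<and> P i}"
  by (rule finite_subset[of _ "{..length w}"]) (auto dest: adv_idx_le_length)

lemma reserve_le_length: "reserve w lab t \<le> int (length w)"
proof -
  have "{i. adv_idx w i \<and> i > lab t} \<subseteq> {1..length w}"
    unfolding adv_idx_def by auto
  then show ?thesis
    unfolding reserve_def by (metis card_atLeastAtMost card_mono diff_Suc_1 finite_atLeastAtMost of_nat_mono)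
qed

lemma reserve_snoc_True:
  assumes "lab t \<le> length w"
  shows "reserve (w @ [True]) lab t = reserve w lab t + 1"
proof -
  have "{i. adv_idx (w @ [True]) i \<and> i > lab t} = insert (Suc (length w)) {i. adv_idx w i \<and> i > lab t}"
    using assms by (auto simp: adv_idx_snoc)
  moreover have "Suc (length w) \<notin> {i. adv_idx w i \<and> i > lab t}"
    by (auto dest: adv_idx_le_length)
  ultimately show ?thesis
    unfolding reserve_def using finite_adv_idx by simp
qed

lemma reserve_snoc_False: "reserve (w @ [False]) lab t = reserve w lab t"
  unfolding reserve_def by (simp add: adv_idx_snoc)

lemma reserve_adv_idx_less:
  assumes "adv_idx w (lab s)" "lab u < lab s"
  shows "reserve w lab s < reserve w lab u"
proof -
  have "insert (lab s) {i. adv_idx w i \<and> i > lab s} \<subseteq> {i. adv_idx w i \<and> i > lab u}"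
    using assms by auto
  then have "card (insert (lab s) {i. adv_idx w i \<and> i > lab s}) \<le> card {i. adv_idx w i \<and> i > lab u}"
    by (rule card_mono[OF finite_adv_idx])
  then show ?thesis
    unfolding reserve_def using finite_adv_idx by simp
qed

lemma is_tree_prefix_closed:
  assumes "is_tree T" "v \<in> T" "prefix u v"
  shows "u \<in> T"
  using assms(2,3)
proof (induction v rule: rev_induct)
  case (snoc a v)
  then show ?case
    using assms(1) unfolding is_tree_def by (metis prefix_snoc)
qed simp

lemma fresh_child:
  fixes T :: "nat list set"
  assumes "finite T"
  obtains k where "t @ [k] \<notin> T"
proof -
  have "finite ((\<lambda>k. t @ [k]) -` T)"
    using assms by (rule finite_vimageI) (simp add: inj_def)
  then obtain k where "k \<notin> (\<lambda>k. t @ [k]) -` T"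
    using ex_new_if_finite[OF infinite_UNIV_nat] by blast
  then show ?thesis using that by simp
qed

lemma fork_is_tree: "is_fork w T lab \<Longrightarrow> is_tree T"
  unfolding is_fork_def by blast

lemma closed_fork_is_tree: "closed_fork w T lab \<Longrightarrow> is_tree T"
  unfolding closed_fork_def is_fork_def by blast

lemma fork_lab_le_length: "is_fork w T lab \<Longrightarrow> v \<in> T \<Longrightarrow> lab v \<le> length w"
  unfolding is_fork_def by blast

lemma fork_lab_mono:
  assumes "is_fork w T lab" "v \<in> T" "prefix u v"
  shows "lab u \<le> lab v"
  using assms(2,3)
proof (induction v rule: rev_induct)
  case (snoc a v)
  have "v \<in> T" "lab v < lab (v @ [a])"
    using assms(1) snoc.prems(1) unfolding is_fork_def is_tree_def by blast+
  moreover have "u = v @ [a] \<or> prefix u v"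
    using snoc.prems(2) by simp
  ultimately show ?case
    using snoc.IH by fastforce
qed simp

lemma fork_length_le_lab:
  assumes "is_fork w T lab" "v \<in> T"
  shows "length v \<le> lab v"
  using assms(2)
proof (induction v rule: rev_induct)
  case (snoc a v)
  have "v \<in> T" "lab v < lab (v @ [a])"
    using assms(1) snoc.prems unfolding is_fork_def is_tree_def by blast+
  with snoc.IH show ?case by simp
qed simp

lemma max_len_ge: "is_tree T \<Longrightarrow> v \<in> T \<Longrightarrow> length v \<le> max_len T"
  unfolding max_len_def is_tree_def by simp

lemma max_len_attained:
  assumes "is_tree T"
  obtains v where "v \<in> T" "length v = max_len T"
proof -
  have "finite (length ` T)" "length ` T \<noteq> {}"
    using assms unfolding is_tree_def by auto
  from Max_in[OF this] show ?thesis
    using that unfolding max_len_def by auto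
qed

lemma max_len_le_length: "is_fork w T lab \<Longrightarrow> max_len T \<le> length w"
  by (metis fork_is_tree fork_lab_le_length fork_length_le_lab max_len_attained order_trans)

lemma reach_le_reserve: "is_tree T \<Longrightarrow> t \<in> T \<Longrightarrow> reach w T lab t \<le> reserve w lab t"
  unfolding reach_def gap_def using max_len_ge by fastforce

lemma reach_of_longest: "length t = max_len T \<Longrightarrow> reach w T lab t = reserve w lab t"
  unfolding reach_def gap_def by simp

lemma rho_fork_ge: "is_tree T \<Longrightarrow> t \<in> T \<Longrightarrow> reach w T lab t \<le> rho_fork w T lab"
  unfolding rho_fork_def is_tree_def by simp

lemma rho_fork_attained:
  assumes "is_tree T"
  obtains t where "t \<in> T" "reach w T lab t = rho_fork w T lab"
proof -
  have "finite (reach w T lab ` T)" "reach w T lab ` T \<noteq> {}"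
    using assms unfolding is_tree_def by auto
  from Max_in[OF this] show ?thesis
    using that unfolding rho_fork_def by auto
qed

lemma rho_fork_nonneg:
  assumes "is_tree T"
  shows "0 \<le> rho_fork w T lab"
proof -
  obtain v where "v \<in> T" "length v = max_len T"
    using max_len_attained[OF assms] .
  then show ?thesis
    using rho_fork_ge[OF assms] reach_of_longest reserve_def by (metis of_nat_0_le_iff order_trans)
qed

lemma rho_fork_le_length: "is_tree T \<Longrightarrow> rho_fork w T lab \<le> int (length w)"
  by (metis reach_le_reserve reserve_le_length rho_fork_attained order_trans)

lemma disjoint_over_sym: "disjoint_over x lab s t \<longleftrightarrow> disjoint_over x lab t s"
  unfolding disjoint_over_def by blast

lemma disjoint_over_prefix:
  "prefix s' s \<Longrightarrow> prefix t' t \<Longrightarrow> disjoint_over x lab s t \<Longrightarrow> disjoint_over x lab s' t'"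
  unfolding disjoint_over_def by (meson prefix_order.trans)

lemma not_disjoint_over_self: "v \<noteq> [] \<Longrightarrow> length x < lab v \<Longrightarrow> \<not> disjoint_over x lab v v"
  unfolding disjoint_over_def by blast

lemma disjoint_over_one_of:
  assumes "disjoint_over x lab t1 t2"
  shows "disjoint_over x lab t1 s \<or> disjoint_over x lab t2 s"
proof (rule ccontr)
  assume "\<not> ?thesis"
  then obtain u1 u2 where
    u1: "u1 \<noteq> []" "prefix u1 t1" "prefix u1 s" "lab u1 > length x" and
    u2: "u2 \<noteq> []" "prefix u2 t2" "prefix u2 s" "lab u2 > length x"
    unfolding disjoint_over_def by blast
  from u1(3) u2(3) have "prefix u1 u2 \<or> prefix u2 u1"
    using prefix_same_cases by blast
  then show False
    using assms u1 u2 unfolding disjoint_over_def by (meson prefix_order.trans)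
qed

lemma disjoint_over_root: "disjoint_over x lab [] []"
  unfolding disjoint_over_def by simp

lemma finite_pair_image:
  "finite T \<Longrightarrow> finite {f t1 t2 | t1 t2. t1 \<in> T \<and> t2 \<in> T \<and> P t1 t2}"
  by (rule finite_subset[of _ "(\<lambda>(t1, t2). f t1 t2) ` (T \<times> T)"]) auto

lemma mu_fork_ge:
  assumes "is_tree T" "t1 \<in> T" "t2 \<in> T" "disjoint_over x lab t1 t2"
  shows "min (reach (x @ y) T lab t1) (reach (x @ y) T lab t2) \<le> mu_fork x y T lab"
  unfolding mu_fork_def using assms finite_pair_image[of T] unfolding is_tree_def
  by (intro Max_ge) auto

lemma mu_fork_attained:
  assumes "is_tree T"
  obtains t1 t2 where "t1 \<in> T" "t2 \<in> T" "disjoint_over x lab t1 t2"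
    "min (reach (x @ y) T lab t1) (reach (x @ y) T lab t2) = mu_fork x y T lab"
proof -
  let ?S = "{min (reach (x @ y) T lab t1) (reach (x @ y) T lab t2) | t1 t2.
    t1 \<in> T \<and> t2 \<in> T \<and> disjoint_over x lab t1 t2}"
  have "[] \<in> T"
    using assms unfolding is_tree_def by blast
  then have nonempty: "?S \<noteq> {}"
    using disjoint_over_root by auto
  have "finite ?S"
    using assms finite_pair_image[of T] unfolding is_tree_def by auto
  from Max_in[OF this nonempty] obtain t1 t2 where "t1 \<in> T" "t2 \<in> T" "disjoint_over x lab t1 t2"
    "Max ?S = min (reach (x @ y) T lab t1) (reach (x @ y) T lab t2)"
    by blast
  then show ?thesis
    using that unfolding mu_fork_def by simp
qed

lemma abs_rho_fork_le: "closed_fork w T lab \<Longrightarrow> \<bar>rho_fork w T lab\<bar> \<le> int (length w)"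
  using rho_fork_nonneg rho_fork_le_length closed_fork_is_tree by (metis abs_of_nonneg)

lemma abs_mu_fork_le:
  assumes "closed_fork (x @ y) T lab"
  shows "\<bar>mu_fork x y T lab\<bar> \<le> int (length (x @ y))"
proof -
  have fork: "is_fork (x @ y) T lab"
    using assms unfolding closed_fork_def by blast
  then have tree: "is_tree T"
    by (rule fork_is_tree)
  obtain t1 t2 where "t1 \<in> T"
    and t: "min (reach (x @ y) T lab t1) (reach (x @ y) T lab t2) = mu_fork x y T lab"
    using mu_fork_attained[OF tree] by metis
  then have "mu_fork x y T lab \<le> int (length (x @ y))"
    using reach_le_reserve[OF tree] reserve_le_length by (metis min.coboundedI1 order_trans)
  moreover have "reach (x @ y) T lab [] \<le> mu_fork x y T lab"
    using mu_fork_ge[OF tree _ _ disjoint_over_root] tree unfolding is_tree_def by fastforce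
  moreover have "- int (length (x @ y)) \<le> reach (x @ y) T lab []"
    using max_len_le_length[OF fork] unfolding reach_def gap_def reserve_def by simp
  ultimately show ?thesis by linarith
qed

section \<open>Adversarial slots\<close>

lemma closed_fork_snoc_True_lab_le:
  assumes closed: "closed_fork (w @ [True]) T lab" and "v \<in> T"
  shows "lab v \<le> length w"
proof (rule ccontr)
  assume "\<not> lab v \<le> length w"
  moreover have fork: "is_fork (w @ [True]) T lab"
    using closed unfolding closed_fork_def by blast
  ultimately have last: "lab v = Suc (length w)"
    using fork_lab_le_length[OF fork \<open>v \<in> T\<close>] by simp
  have "v @ [k] \<notin> T" for k
    using fork last fork_lab_le_length[OF fork, of "v @ [k]"] unfolding is_fork_def by fastforce
  then have "is_leaf T v"
    unfolding is_leaf_def using \<open>v \<in> T\<close> by blast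
  then have "honest_vertex (w @ [True]) lab v"
    using closed unfolding closed_fork_def by blast
  then show False
    using last fork unfolding honest_vertex_def is_fork_def
    by (auto simp: honest_idx_snoc dest: honest_idx_le_length)
qed

lemma closed_fork_snoc_True_iff: "closed_fork (w @ [True]) T lab \<longleftrightarrow> closed_fork w T lab"
proof
  assume closed: "closed_fork (w @ [True]) T lab"
  then show "closed_fork w T lab"
    using closed_fork_snoc_True_lab_le[OF closed]
    unfolding closed_fork_def is_fork_def honest_vertex_def by (simp add: honest_idx_snoc)
next
  assume "closed_fork w T lab"
  then show "closed_fork (w @ [True]) T lab"
    unfolding closed_fork_def is_fork_def honest_vertex_def
    by (auto simp: honest_idx_snoc dest: honest_idx_le_length)
qed

lemma reach_snoc_True:
  assumes "closed_fork w T lab" "t \<in> T"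
  shows "reach (w @ [True]) T lab t = reach w T lab t + 1"
proof -
  have "lab t \<le> length w"
    using assms fork_lab_le_length unfolding closed_fork_def by blast
  then show ?thesis
    unfolding reach_def by (simp add: reserve_snoc_True)
qed

lemma rho_fork_snoc_True:
  assumes closed: "closed_fork w T lab"
  shows "rho_fork (w @ [True]) T lab = rho_fork w T lab + 1"
proof -
  have tree: "is_tree T"
    using closed_fork_is_tree[OF closed] .
  obtain t where t: "t \<in> T" "reach (w @ [True]) T lab t = rho_fork (w @ [True]) T lab"
    using rho_fork_attained[OF tree] .
  then have "rho_fork (w @ [True]) T lab \<le> rho_fork w T lab + 1"
    using rho_fork_ge[OF tree t(1), where w = w and lab = lab] reach_snoc_True[OF closed] by simp
  moreover obtain t' where t': "t' \<in> T" "reach w T lab t' = rho_fork w T lab"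
    using rho_fork_attained[OF tree] .
  then have "rho_fork w T lab + 1 \<le> rho_fork (w @ [True]) T lab"
    using rho_fork_ge[OF tree t'(1), where w = "w @ [True]" and lab = lab] reach_snoc_True[OF closed]
    by simp
  ultimately show ?thesis
    by simp
qed

lemma mu_fork_snoc_True:
  assumes closed: "closed_fork (x @ y) T lab"
  shows "mu_fork x (y @ [True]) T lab = mu_fork x y T lab + 1"
proof -
  have tree: "is_tree T"
    using closed_fork_is_tree[OF closed] .
  have reach: "reach (x @ y @ [True]) T lab t = reach (x @ y) T lab t + 1" if "t \<in> T" for t
    using reach_snoc_True[OF closed that] by simp
  obtain t1 t2 where t: "t1 \<in> T" "t2 \<in> T" "disjoint_over x lab t1 t2"
    "min (reach (x @ y @ [True]) T lab t1) (reach (x @ y @ [True]) T lab t2) = mu_fork x (y @ [True]) T lab"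
    using mu_fork_attained[OF tree] by (metis append_assoc)
  then have "mu_fork x (y @ [True]) T lab \<le> mu_fork x y T lab + 1"
    using mu_fork_ge[OF tree t(1-3), where y = y] reach by simp
  moreover obtain t1' t2' where t': "t1' \<in> T" "t2' \<in> T" "disjoint_over x lab t1' t2'"
    "min (reach (x @ y) T lab t1') (reach (x @ y) T lab t2') = mu_fork x y T lab"
    using mu_fork_attained[OF tree] .
  then have "mu_fork x y T lab + 1 \<le> mu_fork x (y @ [True]) T lab"
    using mu_fork_ge[OF tree t'(1-3), where y = "y @ [True]"] reach by simp
  ultimately show ?thesis
    by simp
qed

section \<open>Extending a closed fork by an honest slot\<close>

locale fork_extension =
  fixes w :: "bool list" and T :: "nat list set" and lab :: "nat list \<Rightarrow> nat"
    and t :: "nat list" and k :: nat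
  assumes closed: "closed_fork w T lab"
    and tine: "t \<in> T"
    and fresh: "t @ [k] \<notin> T"
    and reach_nonneg: "0 \<le> reach w T lab t"
begin

lemma fork: "is_fork w T lab"
  using closed unfolding closed_fork_def by blast

lemma tree: "is_tree T"
  using fork_is_tree[OF fork] .

definition depth_gap :: nat where
  "depth_gap = max_len T - length t"

definition adv_labels :: "nat list" where
  "adv_labels = sorted_list_of_set {i. adv_idx w i \<and> lab t < i}"

definition path :: "nat \<Rightarrow> nat list" where
  "path j = t @ k # replicate j 0"

definition path_lab :: "nat \<Rightarrow> nat" where
  "path_lab j = (if j < depth_gap then adv_labels ! j else Suc (length w))"

definition ext_tree :: "nat list set" where
  "ext_tree = T \<union> path ` {..depth_gap}"

text \<open>Off T, only the values of ext_lab on the new branch matter; there the depth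
  below t determines the position on the branch.\<close>

definition ext_lab :: "nat list \<Rightarrow> nat" where
  "ext_lab u = (if u \<in> T then lab u else path_lab (length u - Suc (length t)))"

lemma length_path: "length (path j) = Suc (length t + j)"
  unfolding path_def by simp

lemma path_eq_iff [simp]: "path i = path j \<longleftrightarrow> i = j"
  using length_path by (metis Suc_inject add_left_cancel)

lemma path_Suc: "path (Suc j) = path j @ [0]"
  unfolding path_def by (simp add: replicate_append_same)

lemma length_path_depth_gap: "length (path depth_gap) = Suc (max_len T)"
  using max_len_ge[OF tree tine] unfolding length_path depth_gap_def by simp

lemma prefix_path_in_tree:
  assumes "u \<in> T" "prefix u (path j)"
  shows "prefix u t"
proof -
  have "prefix u t \<or> (\<exists>zs. u = t @ zs \<and> prefix zs (k # replicate j 0))"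
    using assms(2) unfolding path_def by (simp only: prefix_append)
  then show ?thesis
  proof (elim disjE exE conjE)
    fix zs
    assume u: "u = t @ zs" and "prefix zs (k # replicate j 0)"
    moreover have "\<not> prefix (t @ [k]) u"
      using fresh is_tree_prefix_closed[OF tree assms(1)] by blast
    ultimately show ?thesis
      by (cases zs) auto
  qed
qed

lemma path_notin_tree: "path j \<notin> T"
proof
  assume "path j \<in> T"
  then have "length (path j) \<le> length t"
    using prefix_path_in_tree prefix_length_le by blast
  then show False
    unfolding length_path by simp
qed

lemma ext_lab_path: "ext_lab (path j) = path_lab j"
  unfolding ext_lab_def using path_notin_tree length_path by simp

lemma ext_lab_tree: "u \<in> T \<Longrightarrow> ext_lab u = lab u"
  unfolding ext_lab_def by simp

lemma mem_ext_tree: "u \<in> ext_tree \<longleftrightarrow> u \<in> T \<or> (\<exists>j\<le>depth_gap. u = path j)"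
  unfolding ext_tree_def by auto

lemma snoc_eq_path:
  assumes "u @ [a] = path j"
  shows "(j = 0 \<and> u = t) \<or> (\<exists>j'. j = Suc j' \<and> u = path j')"
  using assms path_Suc by (cases j) (auto simp: path_def)

lemma depth_gap_le: "depth_gap \<le> length adv_labels"
  using reach_nonneg finite_adv_idx
  unfolding depth_gap_def adv_labels_def reach_def reserve_def gap_def by simp

lemma adv_labels_nth:
  assumes "j < depth_gap"
  shows "adv_idx w (adv_labels ! j)" "lab t < adv_labels ! j"
proof -
  have "adv_labels ! j \<in> set adv_labels"
    using assms depth_gap_le by simp
  then show "adv_idx w (adv_labels ! j)" "lab t < adv_labels ! j"
    unfolding adv_labels_def using finite_adv_idx by auto
qed

lemma path_lab_less:
  assumes "j < j'" "j' \<le> depth_gap"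
  shows "path_lab j < path_lab j'"
proof (cases "j' < depth_gap")
  case True
  have "sorted_wrt (<) adv_labels"
    unfolding adv_labels_def by (rule strict_sorted_list_of_set)
  then show ?thesis
    using assms True depth_gap_le unfolding path_lab_def by (simp add: sorted_wrt_iff_nth_less)
next
  case False
  then show ?thesis
    using assms adv_labels_nth(1)[of j] unfolding path_lab_def by (auto dest: adv_idx_le_length)
qed

lemma lab_less_path_lab: "lab t < path_lab j"
  using adv_labels_nth(2) fork_lab_le_length[OF fork tine] unfolding path_lab_def by auto

lemma honest_path_lab_iff:
  assumes "j \<le> depth_gap"
  shows "honest_idx (w @ [False]) (path_lab j) \<longleftrightarrow> j = depth_gap"
  using assms adv_labels_nth(1)[of j] adv_idx_le_length[of w "Suc (length w)"]
  unfolding path_lab_def by (auto simp: honest_idx_snoc dest: honest_idx_not_adv_idx adv_idx_le_length)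

lemma ext_tree_is_tree: "is_tree ext_tree"
  unfolding is_tree_def
proof (intro conjI allI impI)
  show "finite ext_tree"
    using tree unfolding ext_tree_def is_tree_def by simp
  show "[] \<in> ext_tree"
    using tree unfolding ext_tree_def is_tree_def by blast
  fix v a
  assume "v @ [a] \<in> ext_tree"
  then consider "v @ [a] \<in> T" | j where "j \<le> depth_gap" "v @ [a] = path j"
    unfolding mem_ext_tree by blast
  then show "v \<in> ext_tree"
  proof cases
    case 1
    then show ?thesis
      using tree unfolding is_tree_def ext_tree_def by blast
  next
    case 2
    then show ?thesis
      using snoc_eq_path[OF 2(2)] tine unfolding mem_ext_tree by (auto intro: Suc_leD)
  qed
qed

lemma ext_lab_edge:
  assumes "v @ [a] \<in> ext_tree"
  shows "ext_lab v < ext_lab (v @ [a])"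
proof (cases "v @ [a] \<in> T")
  case True
  then have "v \<in> T"
    using tree unfolding is_tree_def by blast
  with True show ?thesis
    using fork ext_lab_tree unfolding is_fork_def by simp
next
  case False
  then obtain j where "j \<le> depth_gap" "v @ [a] = path j"
    using assms unfolding mem_ext_tree by blast
  then show ?thesis
    using snoc_eq_path[of v a j] tine lab_less_path_lab path_lab_less ext_lab_path ext_lab_tree
    by auto
qed

lemma ext_lab_le_length:
  assumes "u \<in> ext_tree"
  shows "ext_lab u \<le> length (w @ [False])"
proof (cases "u \<in> T")
  case True
  then show ?thesis
    using fork_lab_le_length[OF fork] ext_lab_tree by fastforce
next
  case False
  then obtain j where "u = path j"
    using assms unfolding mem_ext_tree by blast
  then show ?thesis
    using adv_idx_le_length[OF adv_labels_nth(1)] ext_lab_path unfolding path_lab_def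
    by (simp add: le_SucI)
qed

lemma honest_ext_lab_iff:
  assumes "u \<in> ext_tree"
  shows "honest_idx (w @ [False]) (ext_lab u) \<longleftrightarrow>
    (u \<in> T \<and> honest_idx w (lab u)) \<or> u = path depth_gap"
proof (cases "u \<in> T")
  case True
  then have "lab u \<le> length w"
    using fork_lab_le_length[OF fork] by blast
  with True show ?thesis
    using path_notin_tree ext_lab_tree by (auto simp: honest_idx_snoc)
next
  case False
  then obtain j where "j \<le> depth_gap" "u = path j"
    using assms unfolding mem_ext_tree by blast
  then show ?thesis
    using False honest_path_lab_iff ext_lab_path by auto
qed

lemma ext_lab_new_vertex: "ext_lab (path depth_gap) = Suc (length w)"
  unfolding ext_lab_path path_lab_def by simp

lemma ext_honest_unique:
  assumes honest: "honest_idx (w @ [False]) i"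
  shows "card {v \<in> ext_tree. ext_lab v = i} = 1"
proof -
  have new_vertex_in: "path depth_gap \<in> ext_tree"
    unfolding mem_ext_tree by blast
  have labelled_i: "(v \<in> T \<and> honest_idx w (lab v)) \<or> v = path depth_gap"
    if "v \<in> ext_tree" "ext_lab v = i" for v
    using honest_ext_lab_iff[OF that(1)] honest that(2) by blast
  show ?thesis
  proof (cases "honest_idx w i")
    case True
    have "{v \<in> ext_tree. ext_lab v = i} = {v \<in> T. lab v = i}"
    proof (intro set_eqI iffI)
      fix v
      assume "v \<in> {v \<in> ext_tree. ext_lab v = i}"
      moreover have "ext_lab (path depth_gap) \<noteq> i"
        using ext_lab_new_vertex honest_idx_le_length[OF True] by simp
      ultimately show "v \<in> {v \<in> T. lab v = i}"
        using labelled_i ext_lab_tree by force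
    qed (simp add: ext_lab_tree ext_tree_def)
    then show ?thesis
      using True fork unfolding is_fork_def by simp
  next
    case False
    then have "i = Suc (length w)"
      using honest by (simp add: honest_idx_snoc)
    have "{v \<in> ext_tree. ext_lab v = i} = {path depth_gap}"
    proof (intro set_eqI iffI)
      fix v
      assume v: "v \<in> {v \<in> ext_tree. ext_lab v = i}"
      have "ext_lab s \<noteq> i" if "s \<in> T" for s
        using that \<open>i = Suc (length w)\<close> ext_lab_tree fork_lab_le_length[OF fork] by fastforce
      then show "v \<in> {path depth_gap}"
        using v labelled_i by blast
    qed (use new_vertex_in ext_lab_new_vertex \<open>i = Suc (length w)\<close> in simp)
    then show ?thesis by simp
  qed
qed

lemma ext_honest_depth:
  assumes "u \<in> ext_tree" "v \<in> ext_tree"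
    and "honest_idx (w @ [False]) (ext_lab u)" "honest_idx (w @ [False]) (ext_lab v)"
    and "ext_lab u < ext_lab v"
  shows "length u < length v"
proof -
  consider "u \<in> T" "honest_idx w (lab u)" "v \<in> T" "honest_idx w (lab v)"
    | "u \<in> T" "v = path depth_gap" | "u = path depth_gap"
    using assms honest_ext_lab_iff by blast
  then show ?thesis
  proof cases
    case 1
    then show ?thesis
      using assms(5) fork ext_lab_tree unfolding is_fork_def by simp
  next
    case 2
    then show ?thesis
      using max_len_ge[OF tree] length_path_depth_gap by fastforce
  next
    case 3
    then show ?thesis
      using assms ext_lab_le_length ext_lab_new_vertex by fastforce
  qed
qed

lemma ext_is_fork: "is_fork (w @ [False]) ext_tree ext_lab"
proof -
  have "ext_lab [] = 0"
    using fork ext_lab_tree unfolding is_fork_def is_tree_def by simp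
  then show ?thesis
    unfolding is_fork_def
    using ext_tree_is_tree ext_lab_le_length ext_lab_edge ext_honest_unique ext_honest_depth
    by blast
qed

lemma ext_closed: "closed_fork (w @ [False]) ext_tree ext_lab"
  unfolding closed_fork_def
proof (intro conjI allI impI)
  show "is_fork (w @ [False]) ext_tree ext_lab"
    by (rule ext_is_fork)
  fix v
  assume leaf: "is_leaf ext_tree v"
  then have "v \<in> ext_tree"
    unfolding is_leaf_def by blast
  then consider "v \<in> T" | j where "j < depth_gap" "v = path j" | "v = path depth_gap"
    unfolding mem_ext_tree by fastforce
  then show "honest_vertex (w @ [False]) ext_lab v"
  proof cases
    case 1
    then have "is_leaf T v"
      using leaf unfolding is_leaf_def ext_tree_def by blast
    then have "honest_vertex w lab v"
      using closed unfolding closed_fork_def by blast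
    then show ?thesis
      using 1 honest_ext_lab_iff ext_lab_tree unfolding honest_vertex_def ext_tree_def by blast
  next
    case 2
    then have "v @ [0] \<in> ext_tree"
      using path_Suc unfolding mem_ext_tree by (metis Suc_leI)
    then show ?thesis
      using leaf unfolding is_leaf_def by blast
  qed (simp add: honest_vertex_def ext_lab_new_vertex honest_idx_snoc)
qed

lemma max_len_ext_tree: "max_len ext_tree = Suc (max_len T)"
proof (rule antisym)
  have "length u \<le> Suc (max_len T)" if "u \<in> ext_tree" for u
    using that max_len_ge[OF tree] length_path max_len_ge[OF tree tine]
    unfolding mem_ext_tree depth_gap_def by fastforce
  then show "max_len ext_tree \<le> Suc (max_len T)"
    by (metis max_len_attained[OF ext_tree_is_tree])
  show "Suc (max_len T) \<le> max_len ext_tree"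
    using max_len_ge[OF ext_tree_is_tree] length_path_depth_gap unfolding mem_ext_tree by force
qed

lemma reach_ext_new_vertex: "reach (w @ [False]) ext_tree ext_lab (path depth_gap) = 0"
proof -
  have "{i. adv_idx (w @ [False]) i \<and> ext_lab (path depth_gap) < i} = {}"
    using ext_lab_new_vertex by (auto dest: adv_idx_le_length)
  then show ?thesis
    using max_len_ext_tree length_path_depth_gap unfolding reach_def reserve_def gap_def
    by (simp only: card.empty)
qed

lemma reach_ext_tree:
  assumes "s \<in> T"
  shows "reach (w @ [False]) ext_tree ext_lab s = reach w T lab s - 1"
  using assms ext_lab_tree max_len_ext_tree
  unfolding reach_def gap_def reserve_snoc_False by (simp add: reserve_def)

lemma disjoint_over_ext_lab:
  assumes "s \<in> T"
  shows "disjoint_over x ext_lab s s' \<longleftrightarrow> disjoint_over x lab s s'"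
  using is_tree_prefix_closed[OF tree assms] ext_lab_tree unfolding disjoint_over_def by metis

lemma disjoint_over_ext_new_vertex:
  assumes "s \<in> T" "disjoint_over x lab t s"
  shows "disjoint_over x ext_lab (path depth_gap) s"
  using assms prefix_path_in_tree is_tree_prefix_closed[OF tree assms(1)] ext_lab_tree
  unfolding disjoint_over_def by (metis prefix_order.trans)

end

lemma closed_fork_extension:
  assumes closed: "closed_fork w T lab" and "t \<in> T" "0 \<le> reach w T lab t"
  obtains T' lab' v where "closed_fork (w @ [False]) T' lab'" "T \<subseteq> T'"
    "\<And>s. s \<in> T \<Longrightarrow> reach (w @ [False]) T' lab' s = reach w T lab s - 1"
    "\<And>s s'. s \<in> T \<Longrightarrow> disjoint_over x lab' s s' \<longleftrightarrow> disjoint_over x lab s s'"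
    "v \<in> T'" "reach (w @ [False]) T' lab' v = 0"
    "\<And>s. s \<in> T \<Longrightarrow> disjoint_over x lab t s \<Longrightarrow> disjoint_over x lab' v s"
proof -
  obtain k where "t @ [k] \<notin> T"
    using fresh_child closed_fork_is_tree[OF closed] unfolding is_tree_def by blast
  then interpret fork_extension w T lab t k
    using assms by unfold_locales
  show ?thesis
    using that[OF ext_closed _ reach_ext_tree disjoint_over_ext_lab _ reach_ext_new_vertex
        disjoint_over_ext_new_vertex]
    unfolding ext_tree_def by blast
qed

lemma closed_fork_exists: "\<exists>T lab. closed_fork w T lab"
proof (induction w rule: rev_induct)
  case Nil
  have "closed_fork [] {[]} (\<lambda>_. 0)"
    unfolding closed_fork_def is_fork_def is_tree_def honest_vertex_def honest_idx_def is_leaf_def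
    by auto
  then show ?case by blast
next
  case (snoc b w)
  then obtain T lab where closed: "closed_fork w T lab"
    by blast
  show ?case
  proof (cases b)
    case True
    then have "closed_fork (w @ [b]) T lab"
      using closed closed_fork_snoc_True_iff by simp
    then show ?thesis by blast
  next
    case False
    have tree: "is_tree T"
      using closed_fork_is_tree[OF closed] .
    obtain t where "t \<in> T" "reach w T lab t = rho_fork w T lab"
      using rho_fork_attained[OF tree] .
    then obtain T' lab' where "closed_fork (w @ [False]) T' lab'"
      using closed_fork_extension[OF closed] rho_fork_nonneg[OF tree] by metis
    then show ?thesis
      using False by auto
  qed
qed

lemma Max_closed_forks:
  fixes f :: "nat list set \<Rightarrow> (nat list \<Rightarrow> nat) \<Rightarrow> int"
  assumes bounded: "\<And>T lab. closed_fork w T lab \<Longrightarrow> \<bar>f T lab\<bar> \<le> n"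
  shows "closed_fork w T lab \<Longrightarrow> f T lab \<le> Max {f T lab | T lab. closed_fork w T lab}"
    and "\<exists>T lab. closed_fork w T lab \<and> f T lab = Max {f T lab | T lab. closed_fork w T lab}"
proof -
  let ?S = "{f T lab | T lab. closed_fork w T lab}"
  have "?S \<subseteq> {- n .. n}"
    using bounded by (fastforce simp: abs_le_iff)
  then have finite: "finite ?S"
    using finite_subset by blast
  then show "closed_fork w T lab \<Longrightarrow> f T lab \<le> Max ?S"
    by (intro Max_ge) auto
  have "?S \<noteq> {}"
    using closed_fork_exists by blast
  from Max_in[OF finite this] show "\<exists>T lab. closed_fork w T lab \<and> f T lab = Max ?S"
    by force
qed

lemma rho_str_ge: "closed_fork w T lab \<Longrightarrow> rho_fork w T lab \<le> rho_str w"
  and rho_str_attained: "\<exists>T lab. closed_fork w T lab \<and> rho_fork w T lab = rho_str w"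
  using Max_closed_forks[where f = "rho_fork w", OF abs_rho_fork_le]
  unfolding rho_str_def by blast+

lemma mu_str_ge: "closed_fork (x @ y) T lab \<Longrightarrow> mu_fork x y T lab \<le> mu_str x y"
  and mu_str_attained: "\<exists>T lab. closed_fork (x @ y) T lab \<and> mu_fork x y T lab = mu_str x y"
  using Max_closed_forks[where f = "mu_fork x y", OF abs_mu_fork_le]
  unfolding mu_str_def by blast+

lemma rho_str_nonneg: "0 \<le> rho_str w"
  using rho_str_attained rho_fork_nonneg closed_fork_is_tree by metis

lemma rho_str_snoc_True: "rho_str (w @ [True]) = rho_str w + 1"
proof (rule antisym)
  obtain T lab where "closed_fork (w @ [True]) T lab" "rho_fork (w @ [True]) T lab = rho_str (w @ [True])"
    using rho_str_attained by blast
  then show "rho_str (w @ [True]) \<le> rho_str w + 1"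
    using closed_fork_snoc_True_iff rho_fork_snoc_True rho_str_ge by (metis add_right_mono)
next
  obtain T lab where "closed_fork w T lab" "rho_fork w T lab = rho_str w"
    using rho_str_attained by blast
  then show "rho_str w + 1 \<le> rho_str (w @ [True])"
    using closed_fork_snoc_True_iff rho_fork_snoc_True rho_str_ge by metis
qed

lemma mu_str_snoc_True: "mu_str x (y @ [True]) = mu_str x y + 1"
proof (rule antisym)
  obtain T lab where "closed_fork (x @ y @ [True]) T lab"
    "mu_fork x (y @ [True]) T lab = mu_str x (y @ [True])"
    using mu_str_attained[of x "y @ [True]"] by auto
  then show "mu_str x (y @ [True]) \<le> mu_str x y + 1"
    using closed_fork_snoc_True_iff mu_fork_snoc_True mu_str_ge
    by (metis add_right_mono append_assoc)
next
  obtain T lab where "closed_fork (x @ y) T lab" "mu_fork x y T lab = mu_str x y"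
    using mu_str_attained by blast
  then show "mu_str x y + 1 \<le> mu_str x (y @ [True])"
    using closed_fork_snoc_True_iff mu_fork_snoc_True mu_str_ge[of x "y @ [True]"]
    by (metis append_assoc)
qed

lemma mu_fork_Nil:
  assumes fork: "is_fork x T lab"
  shows "mu_fork x [] T lab = rho_fork x T lab"
proof (rule antisym)
  have tree: "is_tree T"
    using fork_is_tree[OF fork] .
  obtain t1 t2 where "t1 \<in> T" "min (reach (x @ []) T lab t1) (reach (x @ []) T lab t2) = mu_fork x [] T lab"
    using mu_fork_attained[OF tree] by metis
  then show "mu_fork x [] T lab \<le> rho_fork x T lab"
    using rho_fork_ge[OF tree, of t1 x lab] by (metis append_Nil2 min.coboundedI1)
  obtain t where t: "t \<in> T" "reach x T lab t = rho_fork x T lab"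
    using rho_fork_attained[OF tree] .
  moreover have "disjoint_over x lab t t"
    using t(1) fork_lab_le_length[OF fork] is_tree_prefix_closed[OF tree]
    unfolding disjoint_over_def by (meson leD)
  ultimately show "rho_fork x T lab \<le> mu_fork x [] T lab"
    using mu_fork_ge[OF tree, of t t x lab "[]"] by simp
qed

lemma mu_str_Nil: "mu_str x [] = rho_str x"
proof (rule antisym)
  obtain T lab where "closed_fork x T lab" "mu_fork x [] T lab = mu_str x []"
    using mu_str_attained[of x "[]"] by auto
  then show "mu_str x [] \<le> rho_str x"
    using mu_fork_Nil rho_str_ge unfolding closed_fork_def by metis
next
  obtain T lab where "closed_fork x T lab" "rho_fork x T lab = rho_str x"
    using rho_str_attained by blast
  then show "rho_str x \<le> mu_str x []"
    using mu_fork_Nil mu_str_ge[of x "[]"] unfolding closed_fork_def by fastforce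
qed

section \<open>Restricting a closed fork to the previous slot\<close>

definition mu_after_honest :: "int \<Rightarrow> int \<Rightarrow> int" where
  "mu_after_honest rho mu = (if mu < rho \<and> mu = 0 then 0 else mu - 1)"

locale fork_restriction =
  fixes w :: "bool list" and T' :: "nat list set" and lab :: "nat list \<Rightarrow> nat"
  assumes closed': "closed_fork (w @ [False]) T' lab"
begin

lemma fork': "is_fork (w @ [False]) T' lab"
  using closed' unfolding closed_fork_def by blast

lemma tree': "is_tree T'"
  using fork_is_tree[OF fork'] .

definition new_vertex :: "nat list" where
  "new_vertex = the_elem {v \<in> T'. lab v = Suc (length w)}"

lemma new_vertex_singleton: "{v \<in> T'. lab v = Suc (length w)} = {new_vertex}"
proof -
  have "honest_idx (w @ [False]) (Suc (length w))"
    by (simp add: honest_idx_snoc)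
  then have "card {v \<in> T'. lab v = Suc (length w)} = 1"
    using fork' unfolding is_fork_def by blast
  then obtain v where "{v \<in> T'. lab v = Suc (length w)} = {v}"
    by (rule card_1_singletonE)
  then show ?thesis
    unfolding new_vertex_def by simp
qed

lemma new_vertex_in: "new_vertex \<in> T'"
  and lab_new_vertex: "lab new_vertex = Suc (length w)"
  using new_vertex_singleton by blast+

lemma new_vertex_unique: "s \<in> T' \<Longrightarrow> lab s = Suc (length w) \<Longrightarrow> s = new_vertex"
  using new_vertex_singleton by blast

lemma new_vertex_ne_Nil: "new_vertex \<noteq> []"
  using lab_new_vertex fork' unfolding is_fork_def by auto

definition honest_part :: "nat list set" where
  "honest_part = {u \<in> T'. \<exists>h\<in>T'. prefix u h \<and> honest_vertex w lab h}"

lemma honest_part_subset: "honest_part \<subseteq> T'"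
  unfolding honest_part_def by blast

lemma honest_in_honest_part: "h \<in> T' \<Longrightarrow> honest_vertex w lab h \<Longrightarrow> h \<in> honest_part"
  unfolding honest_part_def by blast

lemma length_lt_new_vertex:
  assumes "u \<in> honest_part"
  shows "length u < length new_vertex"
proof -
  obtain h where h: "h \<in> T'" "prefix u h" "honest_vertex w lab h"
    using assms unfolding honest_part_def by blast
  have "length h < length new_vertex"
  proof (cases "h = []")
    case True
    then show ?thesis
      using new_vertex_ne_Nil by simp
  next
    case False
    then have "honest_idx w (lab h)"
      using h(3) unfolding honest_vertex_def by simp
    then have "honest_idx (w @ [False]) (lab h)" "honest_idx (w @ [False]) (lab new_vertex)"
      "lab h < lab new_vertex"
      using lab_new_vertex honest_idx_le_length[of w "lab h"] by (auto simp: honest_idx_snoc)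
    then show ?thesis
      using fork' h(1) new_vertex_in unfolding is_fork_def by blast
  qed
  then show ?thesis
    using h(2) prefix_length_le by fastforce
qed

lemma honest_part_lab_le:
  assumes "u \<in> honest_part"
  shows "lab u \<le> length w"
proof -
  obtain h where h: "h \<in> T'" "prefix u h" "honest_vertex w lab h"
    using assms unfolding honest_part_def by blast
  have "lab h \<le> length w"
    using h(3) fork' honest_idx_le_length unfolding honest_vertex_def is_fork_def by auto
  then show ?thesis
    using fork_lab_mono[OF fork' h(1,2)] by simp
qed

lemma honest_part_is_tree: "is_tree honest_part"
  unfolding is_tree_def
proof (intro conjI allI impI)
  show "finite honest_part"
    using tree' honest_part_subset finite_subset unfolding is_tree_def by blast
  have "[] \<in> T'"
    using tree' unfolding is_tree_def by blast
  then show "[] \<in> honest_part"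
    using honest_in_honest_part unfolding honest_vertex_def by simp
  fix u a
  assume "u @ [a] \<in> honest_part"
  then obtain h where "u @ [a] \<in> T'" "h \<in> T'" "prefix (u @ [a]) h" "honest_vertex w lab h"
    unfolding honest_part_def by blast
  moreover have "prefix u (u @ [a])"
    by simp
  ultimately show "u \<in> honest_part"
    using tree' unfolding honest_part_def is_tree_def by (blast intro: prefix_order.trans)
qed

lemma honest_part_is_fork: "is_fork w honest_part lab"
proof -
  have "{u \<in> honest_part. lab u = i} = {u \<in> T'. lab u = i}" if "honest_idx w i" for i
    using that honest_part_subset honest_in_honest_part unfolding honest_vertex_def by blast
  then show ?thesis
    using fork' honest_part_is_tree honest_part_lab_le honest_part_subset
    unfolding is_fork_def by (simp add: honest_idx_snoc subset_iff)
qed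

lemma honest_part_closed: "closed_fork w honest_part lab"
  unfolding closed_fork_def
proof (intro conjI allI impI)
  show "is_fork w honest_part lab"
    by (rule honest_part_is_fork)
  fix u
  assume leaf: "is_leaf honest_part u"
  then obtain h where h: "h \<in> T'" "prefix u h" "honest_vertex w lab h"
    unfolding is_leaf_def honest_part_def by blast
  show "honest_vertex w lab u"
  proof (cases "u = h")
    case False
    obtain zs where "h = u @ zs"
      using h(2) by (rule prefixE)
    with False obtain a where "prefix (u @ [a]) h"
      by (cases zs) auto
    then have "u @ [a] \<in> honest_part"
      using h is_tree_prefix_closed[OF tree'] unfolding honest_part_def by blast
    then show ?thesis
      using leaf unfolding is_leaf_def by blast
  qed (use h in simp)
qed

lemma max_len_honest_part_lt: "max_len honest_part < length new_vertex"
  using max_len_attained[OF honest_part_is_tree] length_lt_new_vertex by metis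

lemma ancestor_in_honest_part:
  assumes "s \<in> T'" "s \<noteq> new_vertex"
  shows "\<exists>h\<in>honest_part. prefix h s \<and>
    reserve w lab s + int (length s) \<le> reserve w lab h + int (length h)"
  using assms
proof (induction s rule: rev_induct)
  case Nil
  then show ?case
    using honest_part_is_tree unfolding is_tree_def by blast
next
  case (snoc a u)
  have "u \<in> T'" "lab u < lab (u @ [a])" "lab (u @ [a]) \<le> Suc (length w)"
    using snoc.prems(1) fork' unfolding is_fork_def is_tree_def by auto
  then obtain h where h: "h \<in> honest_part" "prefix h u"
    "reserve w lab u + int (length u) \<le> reserve w lab h + int (length h)"
    using snoc.IH lab_new_vertex by fastforce
  show ?case
  proof (cases "u @ [a] \<in> honest_part")
    case False
    then have "\<not> honest_idx w (lab (u @ [a]))"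
      using honest_in_honest_part snoc.prems(1) unfolding honest_vertex_def by blast
    moreover have "lab (u @ [a]) \<noteq> Suc (length w)"
      using new_vertex_unique snoc.prems by blast
    ultimately have "adv_idx w (lab (u @ [a]))"
      using \<open>lab u < lab (u @ [a])\<close> \<open>lab (u @ [a]) \<le> Suc (length w)\<close>
      unfolding honest_idx_def adv_idx_def by auto
    then have "reserve w lab (u @ [a]) < reserve w lab u"
      using reserve_adv_idx_less \<open>lab u < lab (u @ [a])\<close> by blast
    then show ?thesis
      using h by (intro bexI[of _ h]) auto
  qed auto
qed

lemma reach_le_ancestor:
  assumes "s \<in> T'" "s \<noteq> new_vertex"
  obtains h where "h \<in> honest_part" "prefix h s"
    "reach (w @ [False]) T' lab s \<le> reach w honest_part lab h - 1"
proof -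
  have "max_len honest_part < max_len T'"
    using max_len_honest_part_lt max_len_ge[OF tree' new_vertex_in] by linarith
  then show ?thesis
    using ancestor_in_honest_part[OF assms] that
    unfolding reach_def gap_def reserve_snoc_False by fastforce
qed

lemma new_vertex_ancestor:
  obtains h where "h \<in> honest_part" "prefix h new_vertex" "0 \<le> reach w honest_part lab h"
proof -
  obtain u a where ua: "new_vertex = u @ [a]"
    using new_vertex_ne_Nil by (metis rev_exhaust)
  then have "u \<in> T'" "u \<noteq> new_vertex"
    using new_vertex_in tree' unfolding is_tree_def by auto
  then obtain h where h: "h \<in> honest_part" "prefix h u"
    "reserve w lab u + int (length u) \<le> reserve w lab h + int (length h)"
    using ancestor_in_honest_part by blast
  moreover have "prefix h new_vertex"
    using h(2) ua by (simp add: prefix_order.trans)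
  moreover have "0 \<le> reach w honest_part lab h"
    using h(3) max_len_honest_part_lt ua unfolding reach_def gap_def reserve_def by simp
  ultimately show ?thesis
    using that by blast
qed

lemma reach_new_vertex_nonpos: "reach (w @ [False]) T' lab new_vertex \<le> 0"
proof -
  have "{i. adv_idx (w @ [False]) i \<and> lab new_vertex < i} = {}"
    using lab_new_vertex by (auto dest: adv_idx_le_length)
  then show ?thesis
    using max_len_ge[OF tree' new_vertex_in] unfolding reach_def reserve_def gap_def
    by (simp only: card.empty)
qed

lemma reach_honest_part_le_rho_str:
  "h \<in> honest_part \<Longrightarrow> reach w honest_part lab h \<le> rho_str w"
  using rho_fork_ge[OF honest_part_is_tree, where w = w and lab = lab]
    rho_str_ge[OF honest_part_closed] by (meson order_trans)

lemma reach_honest_part_le_mu_str: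
  assumes "w = x @ y" "h1 \<in> honest_part" "h2 \<in> honest_part" "disjoint_over x lab h1 h2"
  shows "min (reach w honest_part lab h1) (reach w honest_part lab h2) \<le> mu_str x y"
  using mu_fork_ge[OF honest_part_is_tree assms(2-4), where y = y]
    mu_str_ge[of x y honest_part lab] honest_part_closed assms(1) by simp

lemma reach_le_max_pred_rho_str:
  assumes "s \<in> T'"
  shows "reach (w @ [False]) T' lab s \<le> max (rho_str w - 1) 0"
proof (cases "s = new_vertex")
  case True
  then show ?thesis
    using reach_new_vertex_nonpos by simp
next
  case False
  then obtain h where "h \<in> honest_part" "reach (w @ [False]) T' lab s \<le> reach w honest_part lab h - 1"
    using reach_le_ancestor[OF assms] by metis
  then have "reach (w @ [False]) T' lab s \<le> rho_str w - 1"
    using reach_honest_part_le_rho_str by fastforce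
  then show ?thesis
    by simp
qed

lemma min_reach_le_pred_mu_str:
  assumes "w = x @ y" "a \<in> T'" "b \<in> T'" "a \<noteq> new_vertex" "b \<noteq> new_vertex"
    and "disjoint_over x lab a b"
  shows "min (reach (w @ [False]) T' lab a) (reach (w @ [False]) T' lab b) \<le> mu_str x y - 1"
proof -
  obtain h1 where "h1 \<in> honest_part" "prefix h1 a"
    "reach (w @ [False]) T' lab a \<le> reach w honest_part lab h1 - 1"
    using reach_le_ancestor[OF assms(2,4)] .
  moreover obtain h2 where "h2 \<in> honest_part" "prefix h2 b"
    "reach (w @ [False]) T' lab b \<le> reach w honest_part lab h2 - 1"
    using reach_le_ancestor[OF assms(3,5)] .
  ultimately show ?thesis
    using reach_honest_part_le_mu_str[OF assms(1)] disjoint_over_prefix[OF _ _ assms(6)]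
    by fastforce
qed

lemma min_reach_new_vertex_le:
  assumes "w = x @ y" "b \<in> T'" "b \<noteq> new_vertex" "disjoint_over x lab new_vertex b"
  shows "min (reach (w @ [False]) T' lab new_vertex) (reach (w @ [False]) T' lab b)
    \<le> mu_after_honest (rho_str w) (mu_str x y)"
proof -
  obtain h where h: "h \<in> honest_part" "prefix h new_vertex" "0 \<le> reach w honest_part lab h"
    using new_vertex_ancestor .
  obtain h2 where h2: "h2 \<in> honest_part" "prefix h2 b"
    "reach (w @ [False]) T' lab b \<le> reach w honest_part lab h2 - 1"
    using reach_le_ancestor[OF assms(2,3)] .
  have "min (reach w honest_part lab h) (reach w honest_part lab h2) \<le> mu_str x y"
    using reach_honest_part_le_mu_str[OF assms(1) h(1) h2(1)] disjoint_over_prefix[OF h(2) h2(2) assms(4)]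
    by blast
  then show ?thesis
    using reach_honest_part_le_rho_str[OF h2(1)] h(3) h2(3) reach_new_vertex_nonpos
    unfolding mu_after_honest_def by auto
qed

lemma min_reach_le_mu_after_honest:
  assumes "w = x @ y" "a \<in> T'" "b \<in> T'" "disjoint_over x lab a b"
  shows "min (reach (w @ [False]) T' lab a) (reach (w @ [False]) T' lab b)
    \<le> mu_after_honest (rho_str w) (mu_str x y)"
proof -
  have "\<not> disjoint_over x lab new_vertex new_vertex"
    using not_disjoint_over_self[OF new_vertex_ne_Nil] lab_new_vertex assms(1) by simp
  then consider "a \<noteq> new_vertex" "b \<noteq> new_vertex"
    | "a = new_vertex" "b \<noteq> new_vertex" | "b = new_vertex" "a \<noteq> new_vertex"
    using assms(4) by blast
  then show ?thesis
  proof cases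
    case 1
    have "mu_str x y - 1 \<le> mu_after_honest (rho_str w) (mu_str x y)"
      unfolding mu_after_honest_def by simp
    then show ?thesis
      using min_reach_le_pred_mu_str[OF assms(1-3) 1 assms(4)] by linarith
  next
    case 2
    then show ?thesis
      using min_reach_new_vertex_le[OF assms(1,3) 2(2)] assms(4) by simp
  next
    case 3
    then show ?thesis
      using min_reach_new_vertex_le[OF assms(1,2) 3(2)] assms(4) disjoint_over_sym
      by (simp add: min.commute)
  qed
qed

end

lemma rho_fork_snoc_False_le:
  assumes "closed_fork (w @ [False]) T' lab"
  shows "rho_fork (w @ [False]) T' lab \<le> max (rho_str w - 1) 0"
proof -
  interpret fork_restriction w T' lab
    using assms by unfold_locales
  obtain s where "s \<in> T'" "reach (w @ [False]) T' lab s = rho_fork (w @ [False]) T' lab"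
    using rho_fork_attained[OF tree'] .
  then show ?thesis
    using reach_le_max_pred_rho_str by metis
qed

lemma mu_fork_snoc_False_le:
  assumes "closed_fork (x @ y @ [False]) T' lab"
  shows "mu_fork x (y @ [False]) T' lab \<le> mu_after_honest (rho_str (x @ y)) (mu_str x y)"
proof -
  interpret fork_restriction "x @ y" T' lab
    using assms by unfold_locales simp
  obtain a b where "a \<in> T'" "b \<in> T'" "disjoint_over x lab a b"
    "min (reach (x @ y @ [False]) T' lab a) (reach (x @ y @ [False]) T' lab b) = mu_fork x (y @ [False]) T' lab"
    using mu_fork_attained[OF tree'] by (metis append_assoc)
  then show ?thesis
    using min_reach_le_mu_after_honest[OF refl] by (metis append_assoc)
qed

section \<open>The recurrence\<close>

definition optimal_fork ::
  "bool list \<Rightarrow> bool list \<Rightarrow> nat list set \<Rightarrow> (nat list \<Rightarrow> nat) \<Rightarrow> bool" where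
  "optimal_fork x y T lab \<longleftrightarrow> closed_fork (x @ y) T lab
     \<and> rho_fork (x @ y) T lab = rho_str (x @ y) \<and> mu_fork x y T lab = mu_str x y"

lemma max_pred_le_rho_fork:
  assumes "closed_fork w T lab" "t \<in> T" "reach w T lab t = r - 1"
  shows "max (r - 1) 0 \<le> rho_fork w T lab"
  using assms rho_fork_ge rho_fork_nonneg closed_fork_is_tree by (metis max.boundedI)

lemma extension_at_rho_tine:
  assumes "optimal_fork x y T lab"
  obtains T' lab' where "closed_fork (x @ y @ [False]) T' lab'"
    "max (rho_str (x @ y) - 1) 0 \<le> rho_fork (x @ y @ [False]) T' lab'"
    "mu_str x y - 1 \<le> mu_fork x (y @ [False]) T' lab'"
proof -
  have closed: "closed_fork (x @ y) T lab"
    using assms unfolding optimal_fork_def by blast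
  have tree: "is_tree T"
    using closed_fork_is_tree[OF closed] .
  obtain tr where tr: "tr \<in> T" "reach (x @ y) T lab tr = rho_str (x @ y)"
    using rho_fork_attained[OF tree] assms unfolding optimal_fork_def by metis
  obtain t1 t2 where t: "t1 \<in> T" "t2 \<in> T" "disjoint_over x lab t1 t2"
    "min (reach (x @ y) T lab t1) (reach (x @ y) T lab t2) = mu_str x y"
    using mu_fork_attained[OF tree] assms unfolding optimal_fork_def by metis
  obtain T' lab' where closed': "closed_fork (x @ y @ [False]) T' lab'" and "T \<subseteq> T'"
    and reach: "\<And>s. s \<in> T \<Longrightarrow> reach (x @ y @ [False]) T' lab' s = reach (x @ y) T lab s - 1"
    and disjoint: "\<And>s s'. s \<in> T \<Longrightarrow> disjoint_over x lab' s s' \<longleftrightarrow> disjoint_over x lab s s'"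
    using closed_fork_extension[OF closed tr(1)] tr(2) rho_str_nonneg by (metis append_assoc)
  have "min (reach (x @ y @ [False]) T' lab' t1) (reach (x @ y @ [False]) T' lab' t2)
      \<le> mu_fork x (y @ [False]) T' lab'"
    using mu_fork_ge[OF closed_fork_is_tree[OF closed']] t(1-3) disjoint \<open>T \<subseteq> T'\<close>
    by (metis append_assoc subsetD)
  then show ?thesis
    using that[OF closed' max_pred_le_rho_fork[OF closed']] reach tr t \<open>T \<subseteq> T'\<close> by force
qed

lemma extension_at_zero_margin:
  assumes "optimal_fork x y T lab" "mu_str x y < rho_str (x @ y)" "mu_str x y = 0"
  obtains T' lab' where "closed_fork (x @ y @ [False]) T' lab'"
    "max (rho_str (x @ y) - 1) 0 \<le> rho_fork (x @ y @ [False]) T' lab'"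
    "0 \<le> mu_fork x (y @ [False]) T' lab'"
proof -
  have closed: "closed_fork (x @ y) T lab"
    using assms unfolding optimal_fork_def by blast
  have tree: "is_tree T"
    using closed_fork_is_tree[OF closed] .
  obtain tr where tr: "tr \<in> T" "reach (x @ y) T lab tr = rho_str (x @ y)"
    using rho_fork_attained[OF tree] assms unfolding optimal_fork_def by metis
  obtain t1 t2 where t: "t1 \<in> T" "t2 \<in> T" "disjoint_over x lab t1 t2"
    "min (reach (x @ y) T lab t1) (reach (x @ y) T lab t2) = 0"
    using mu_fork_attained[OF tree] assms unfolding optimal_fork_def by metis
  then obtain ti where ti: "ti \<in> T" "disjoint_over x lab ti tr" "0 \<le> reach (x @ y) T lab ti"
    using disjoint_over_one_of[OF t(3), of tr] by (metis min.bounded_iff order_refl)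
  obtain T' lab' v where closed': "closed_fork (x @ y @ [False]) T' lab'" and "T \<subseteq> T'"
    and reach: "\<And>s. s \<in> T \<Longrightarrow> reach (x @ y @ [False]) T' lab' s = reach (x @ y) T lab s - 1"
    and v: "v \<in> T'" "reach (x @ y @ [False]) T' lab' v = 0" "disjoint_over x lab' v tr"
    using closed_fork_extension[OF closed ti(1,3), where x = x] ti(2) tr(1) by (metis append_assoc)
  have "min (reach (x @ y @ [False]) T' lab' v) (reach (x @ y @ [False]) T' lab' tr)
      \<le> mu_fork x (y @ [False]) T' lab'"
    using mu_fork_ge[OF closed_fork_is_tree[OF closed'] v(1) _ v(3)] tr(1) \<open>T \<subseteq> T'\<close>
    by (metis append_assoc subsetD)
  then show ?thesis
    using that[OF closed' max_pred_le_rho_fork[OF closed']] reach tr v(2) assms(2,3) \<open>T \<subseteq> T'\<close>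
    by force
qed

lemma optimal_fork_snoc_False_lower:
  assumes "optimal_fork x y T lab"
  obtains T' lab' where "closed_fork (x @ y @ [False]) T' lab'"
    "max (rho_str (x @ y) - 1) 0 \<le> rho_fork (x @ y @ [False]) T' lab'"
    "mu_after_honest (rho_str (x @ y)) (mu_str x y) \<le> mu_fork x (y @ [False]) T' lab'"
proof (cases "mu_str x y < rho_str (x @ y) \<and> mu_str x y = 0")
  case True
  then obtain T' lab' where "closed_fork (x @ y @ [False]) T' lab'"
    "max (rho_str (x @ y) - 1) 0 \<le> rho_fork (x @ y @ [False]) T' lab'"
    "0 \<le> mu_fork x (y @ [False]) T' lab'"
    using extension_at_zero_margin[OF assms] by blast
  then show ?thesis
    using that True unfolding mu_after_honest_def by simp
next
  case False
  obtain T' lab' where "closed_fork (x @ y @ [False]) T' lab'"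
    "max (rho_str (x @ y) - 1) 0 \<le> rho_fork (x @ y @ [False]) T' lab'"
    "mu_str x y - 1 \<le> mu_fork x (y @ [False]) T' lab'"
    using extension_at_rho_tine[OF assms] by blast
  then show ?thesis
    using that False unfolding mu_after_honest_def by simp
qed

lemma optimal_fork_snoc_False:
  assumes "optimal_fork x y T lab"
  shows "mu_str x (y @ [False]) = mu_after_honest (rho_str (x @ y)) (mu_str x y)"
    and "\<exists>T' lab'. optimal_fork x (y @ [False]) T' lab'"
proof -
  let ?target = "mu_after_honest (rho_str (x @ y)) (mu_str x y)"
  obtain T' lab' where T': "closed_fork (x @ y @ [False]) T' lab'"
    "max (rho_str (x @ y) - 1) 0 \<le> rho_fork (x @ y @ [False]) T' lab'"
    "?target \<le> mu_fork x (y @ [False]) T' lab'"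
    using optimal_fork_snoc_False_lower[OF assms] .
  obtain T2 lab2 where T2: "closed_fork (x @ y @ [False]) T2 lab2"
    "rho_fork (x @ y @ [False]) T2 lab2 = rho_str (x @ y @ [False])"
    using rho_str_attained by blast
  obtain T3 lab3 where T3: "closed_fork (x @ y @ [False]) T3 lab3"
    "mu_fork x (y @ [False]) T3 lab3 = mu_str x (y @ [False])"
    using mu_str_attained[of x "y @ [False]"] by auto
  have "rho_fork (x @ y @ [False]) T' lab' = rho_str (x @ y @ [False])"
    using T'(1,2) T2 rho_str_ge[OF T'(1)] rho_fork_snoc_False_le[of "x @ y"] by fastforce
  moreover show mu: "mu_str x (y @ [False]) = ?target"
    using T'(1,3) T3 mu_str_ge[of x "y @ [False]"] mu_fork_snoc_False_le by fastforce
  moreover have "mu_fork x (y @ [False]) T' lab' = mu_str x (y @ [False])"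
    using T'(1,3) mu mu_str_ge[of x "y @ [False]"] by fastforce
  ultimately show "\<exists>T' lab'. optimal_fork x (y @ [False]) T' lab'"
    using T'(1) unfolding optimal_fork_def by auto
qed

lemma optimal_fork_snoc_True:
  assumes "optimal_fork x y T lab"
  shows "optimal_fork x (y @ [True]) T lab"
  using assms closed_fork_snoc_True_iff rho_fork_snoc_True rho_str_snoc_True
    mu_fork_snoc_True mu_str_snoc_True
  unfolding optimal_fork_def by (metis append_assoc)

lemma optimal_fork_Nil: "\<exists>T lab. optimal_fork x [] T lab"
proof -
  obtain T lab where "closed_fork x T lab" "rho_fork x T lab = rho_str x"
    using rho_str_attained by blast
  moreover from this have "mu_fork x [] T lab = mu_str x []"
    using mu_fork_Nil mu_str_Nil unfolding closed_fork_def by simp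
  ultimately show ?thesis
    unfolding optimal_fork_def by auto
qed

lemma optimal_fork_exists: "\<exists>T lab. optimal_fork x y T lab"
proof (induction y rule: rev_induct)
  case Nil
  then show ?case by (rule optimal_fork_Nil)
next
  case (snoc b y)
  then obtain T lab where optimal: "optimal_fork x y T lab"
    by blast
  show ?case
  proof (cases b)
    case True
    then show ?thesis
      using optimal_fork_snoc_True[OF optimal] by auto
  next
    case False
    then show ?thesis
      using optimal_fork_snoc_False(2)[OF optimal] by simp
  qed
qed

lemma mu_str_snoc_False:
  "mu_str x (y @ [False]) = mu_after_honest (rho_str (x @ y)) (mu_str x y)"
  using optimal_fork_exists optimal_fork_snoc_False(1) by metis

theorem lemma3:
  fixes x :: "bool list"
  shows "mu_str x [] = rho_str x
    \<and> (\<forall>y. x @ y \<noteq> [] \<longrightarrow>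
          mu_str x (y @ [True]) = mu_str x y + 1
        \<and> mu_str x (y @ [False]) =
            (if rho_str (x @ y) > mu_str x y \<and> mu_str x y = 0 then 0 else mu_str x y - 1))
    \<and> (\<forall>y. \<exists>T lab. closed_fork (x @ y) T lab \<and> rho_fork (x @ y) T lab = rho_str (x @ y)
           \<and> mu_fork x y T lab = mu_str x y)"
  using mu_str_Nil mu_str_snoc_True mu_str_snoc_False optimal_fork_exists
  unfolding mu_after_honest_def optimal_fork_def by blast

end
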